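(* Let $H=\Theta(2,4,4,4)$ and $G=H^2$. Then $G$ is equitably $6$-choosable.
   Context: $\Theta(l_1,\ldots,l_m)$ denotes the graph consisting of two vertices $u,w$ joined by $m$ internally disjoint paths of lengths $l_1,\ldots,l_m$. For a graph $H$, $H^2$ has vertex set $V(H)$ with two vertices adjacent iff their distance in $H$ is 1 or 2. A $k$-assignment $L$ assigns to each vertex a set of exactly $k$ colors; an equitable $L$-coloring of $G$ is a proper coloring $f$ with $f(v)\in L(v)$ such that no color is used more than $\lceil |V(G)|/k\rceil$ times; $G$ is equitably $k$-choosable if it has an equitable $L$-coloring for every $k$-assignment $L$. *)

theory Defs
  imports Complex_Main
begin

text \<open>Simple graphs are given by a vertex set V and an adjacency predicate E
  (intended symmetric and irreflexive on V).\<close>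

datatype theta_vertex = TU | TW | TM nat nat

text \<open>Theta(l_1,...,l_m): two vertices TU, TW joined by m internally disjoint paths;
  path i has vertices TU = pv i 0, TM i 1, ..., TM i (l_i - 1), pv i l_i = TW.\<close>

definition theta_pv :: "nat list \<Rightarrow> nat \<Rightarrow> nat \<Rightarrow> theta_vertex" where
  "theta_pv ls i j = (if j = 0 then TU else if j = ls ! i then TW else TM i j)"

definition theta_V :: "nat list \<Rightarrow> theta_vertex set" where
  "theta_V ls = {TU, TW} \<union> {TM i j | i j. i < length ls \<and> 0 < j \<and> j < ls ! i}"

definition theta_E :: "nat list \<Rightarrow> theta_vertex \<Rightarrow> theta_vertex \<Rightarrow> bool" where
  "theta_E ls x y = (\<exists>i j. i < length ls \<and> j < ls ! i \<and>
      ((x = theta_pv ls i j \<and> y = theta_pv ls i (Suc j)) \<or>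
       (y = theta_pv ls i j \<and> x = theta_pv ls i (Suc j))))"

definition graph_square :: "'a set \<Rightarrow> ('a \<Rightarrow> 'a \<Rightarrow> bool) \<Rightarrow> 'a \<Rightarrow> 'a \<Rightarrow> bool" where
  "graph_square V E x y = (x \<in> V \<and> y \<in> V \<and> x \<noteq> y \<and>
      (E x y \<or> (\<exists>z\<in>V. E x z \<and> E z y)))"

definition k_assignment :: "'a set \<Rightarrow> nat \<Rightarrow> ('a \<Rightarrow> 'c set) \<Rightarrow> bool" where
  "k_assignment V k L = (\<forall>v\<in>V. finite (L v) \<and> card (L v) = k)"

definition equitable_L_coloring ::
    "'a set \<Rightarrow> ('a \<Rightarrow> 'a \<Rightarrow> bool) \<Rightarrow> nat \<Rightarrow> ('a \<Rightarrow> 'c set) \<Rightarrow> ('a \<Rightarrow> 'c) \<Rightarrow> bool" where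
  "equitable_L_coloring V E k L f =
     ((\<forall>v\<in>V. f v \<in> L v) \<and>
      (\<forall>x\<in>V. \<forall>y\<in>V. E x y \<longrightarrow> f x \<noteq> f y) \<and>
      (\<forall>c. real (card {v\<in>V. f v = c}) \<le> of_int \<lceil>real (card V) / real k\<rceil>))"

definition equitably_choosable :: "'a set \<Rightarrow> ('a \<Rightarrow> 'a \<Rightarrow> bool) \<Rightarrow> nat \<Rightarrow> 'c itself \<Rightarrow> bool" where
  "equitably_choosable V E k _ =
     (\<forall>L :: 'a \<Rightarrow> 'c set. k_assignment V k L \<longrightarrow> (\<exists>f. equitable_L_coloring V E k L f))"

end

theory Submission
  imports Defs
begin

text \<open>Add to the square G of H = Theta(2,4,4,4) the missing edges inside the two vertex sets
  {u, m, a1, a2, a3, b3} and {w, b1, c1, b2, c2, c3}, where m = TM 0 1 is the middle vertex of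
  the short path and a_i, b_i, c_i = TM i 1, TM i 2, TM i 3 are the internal vertices of the long
  ones. The resulting supergraph G' is covered by two copies of K6, so in any proper colouring of
  G' every colour is used at most twice, i.e. at most \<lceil>12/6\<rceil> times. G' has an
  orientation of maximum out-degree 5 in which every induced subdigraph has a kernel; by the
  kernel method of Bondy, Boppana and Siegel every 6-assignment therefore admits a proper
  colouring of G', which is then an equitable colouring of G.\<close>

definition is_kernel :: "('v \<Rightarrow> 'v \<Rightarrow> bool) \<Rightarrow> 'v set \<Rightarrow> 'v set \<Rightarrow> bool" where
  "is_kernel D X K \<longleftrightarrow>
     K \<subseteq> X \<and> (\<forall>x\<in>K. \<forall>y\<in>K. \<not> D x y) \<and> (\<forall>v\<in>X - K. \<exists>u\<in>K. D v u)"

definition kernel_perfect :: "('v \<Rightarrow> 'v \<Rightarrow> bool) \<Rightarrow> 'v set \<Rightarrow> bool" where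
  "kernel_perfect D W \<longleftrightarrow> (\<forall>X\<subseteq>W. \<exists>K. is_kernel D X K)"

lemma kernel_perfect_subset: "kernel_perfect D W \<Longrightarrow> W' \<subseteq> W \<Longrightarrow> kernel_perfect D W'"
  unfolding kernel_perfect_def by blast

lemma out_degree_less_card_after_kernel_removal:
  assumes "finite W" and K: "is_kernel D {v\<in>W. c \<in> L v} K"
    and v: "v \<in> W - K" and "finite (L v)" and deg: "card {u\<in>W. D v u} < card (L v)"
  shows "card {u\<in>W - K. D v u} < card (L v - {c})"
proof (cases "c \<in> L v")
  case True
  then obtain u where "u \<in> K" "D v u"
    using K v unfolding is_kernel_def by blast
  then have "{u\<in>W - K. D v u} \<subset> {u\<in>W. D v u}"
    using K unfolding is_kernel_def by blast
  then have "card {u\<in>W - K. D v u} < card {u\<in>W. D v u}"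
    using \<open>finite W\<close> by (simp add: psubset_card_mono)
  with deg True \<open>finite (L v)\<close> show ?thesis by simp
next
  case False
  have "card {u\<in>W - K. D v u} \<le> card {u\<in>W. D v u}"
    using \<open>finite W\<close> by (intro card_mono) auto
  with deg False show ?thesis by simp
qed

text \<open>Colour a kernel of the vertices whose lists contain some colour c with c, delete it and
  remove c from the remaining lists: every remaining vertex either lacks c or has lost an
  out-neighbour, so the out-degree stays below the list size.\<close>

theorem kernel_perfect_list_colouring:
  assumes "finite W" and "kernel_perfect D W"
    and "\<forall>v\<in>W. finite (L v) \<and> card {u\<in>W. D v u} < card (L v)"
  shows "\<exists>f. (\<forall>v\<in>W. f v \<in> L v) \<and> (\<forall>x\<in>W. \<forall>y\<in>W. D x y \<longrightarrow> f x \<noteq> f y)"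
  using assms
proof (induction "card W" arbitrary: W L rule: less_induct)
  case less
  show ?case
  proof (cases "W = {}")
    case False
    then obtain v0 where v0: "v0 \<in> W" by blast
    with less.prems(3) have "L v0 \<noteq> {}" by (metis card.empty not_less_zero)
    then obtain c where c: "c \<in> L v0" by blast
    have "\<exists>K. is_kernel D {v\<in>W. c \<in> L v} K"
      by (rule less.prems(2)[unfolded kernel_perfect_def, rule_format]) blast
    then obtain K where K: "is_kernel D {v\<in>W. c \<in> L v} K" ..
    then have "K \<subseteq> W" "K \<noteq> {}"
      using v0 c unfolding is_kernel_def by blast+
    with less.prems(1) have smaller: "card (W - K) < card W"
      by (intro psubset_card_mono) blast+
    have perfect: "kernel_perfect D (W - K)"
      using less.prems(2) Diff_subset by (rule kernel_perfect_subset)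
    have lists: "\<forall>v\<in>W - K. finite (L v - {c}) \<and> card {u\<in>W - K. D v u} < card (L v - {c})"
    proof
      fix v assume v: "v \<in> W - K"
      with less.prems(3) have "finite (L v)" "card {u\<in>W. D v u} < card (L v)" by auto
      with out_degree_less_card_after_kernel_removal[OF less.prems(1) K v]
      show "finite (L v - {c}) \<and> card {u\<in>W - K. D v u} < card (L v - {c})" by blast
    qed
    obtain g where g: "\<forall>v\<in>W - K. g v \<in> L v - {c}"
      and g_proper: "\<forall>x\<in>W - K. \<forall>y\<in>W - K. D x y \<longrightarrow> g x \<noteq> g y"
      using less.hyps[OF smaller finite_Diff[OF less.prems(1)] perfect lists] by blast
    define f where "f v = (if v \<in> K then c else g v)" for v
    have "\<forall>v\<in>W. f v \<in> L v"
      using g K unfolding f_def is_kernel_def by auto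
    moreover have "f x \<noteq> f y" if "x \<in> W" "y \<in> W" "D x y" for x y
      using that g g_proper K unfolding f_def is_kernel_def by (cases "x \<in> K"; cases "y \<in> K") auto
    ultimately show ?thesis by blast
  qed simp
qed

lemma colour_class_card_le_clique_cover:
  assumes "finite V" "finite \<Q>" "V \<subseteq> \<Union>\<Q>"
    and cliques: "\<forall>Q\<in>\<Q>. \<forall>x\<in>Q. \<forall>y\<in>Q. x \<noteq> y \<longrightarrow> D x y \<or> D y x"
    and proper: "\<forall>x\<in>V. \<forall>y\<in>V. D x y \<longrightarrow> f x \<noteq> f y"
  shows "card {v\<in>V. f v = c} \<le> card \<Q>"
proof -
  have "{v\<in>V. f v = c} = (\<Union>Q\<in>\<Q>. {v\<in>V. f v = c} \<inter> Q)"
    using \<open>V \<subseteq> \<Union>\<Q>\<close> by blast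
  then have "card {v\<in>V. f v = c} = card (\<Union>Q\<in>\<Q>. {v\<in>V. f v = c} \<inter> Q)"
    by simp
  also have "\<dots> \<le> (\<Sum>Q\<in>\<Q>. card ({v\<in>V. f v = c} \<inter> Q))"
    using \<open>finite \<Q>\<close> by (rule card_UN_le)
  also have "\<dots> \<le> (\<Sum>Q\<in>\<Q>. 1)"
  proof (intro sum_mono)
    fix Q assume "Q \<in> \<Q>"
    have "x = y" if "x \<in> {v\<in>V. f v = c} \<inter> Q" "y \<in> {v\<in>V. f v = c} \<inter> Q" for x y
    proof (rule ccontr)
      assume "x \<noteq> y"
      with cliques \<open>Q \<in> \<Q>\<close> that have "D x y \<or> D y x" by blast
      then show False
        using proper[rule_format, of x y] proper[rule_format, of y x] that by auto
    qed
    then show "card ({v\<in>V. f v = c} \<inter> Q) \<le> 1"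
      using \<open>finite V\<close> by (simp add: card_le_Suc0_iff_eq)
  qed
  finally show ?thesis by simp
qed

datatype 'v kernel_tree = Leaf "'v list" | Branch 'v "'v kernel_tree" "'v kernel_tree"

text \<open>A kernel tree decides membership in X of one vertex per branch; along a path, P lists
  the vertices known to lie in X and Q those known to lie outside. A leaf must give a kernel of
  every X compatible with P and Q, so a tree certified from empty P and Q is a certificate of
  kernel-perfectness that the simplifier can check.\<close>

fun certifies_kernels ::
    "('v \<Rightarrow> 'v \<Rightarrow> bool) \<Rightarrow> 'v list \<Rightarrow> 'v kernel_tree \<Rightarrow> 'v list \<Rightarrow> 'v list \<Rightarrow> bool" where
  "certifies_kernels D Vs (Leaf K) P Q \<longleftrightarrow>
     set K \<subseteq> set P \<and> (\<forall>x\<in>set K. \<forall>y\<in>set K. \<not> D x y) \<and>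
     (\<forall>v\<in>set Vs. v \<in> set Q \<or> v \<in> set K \<or> (\<exists>u\<in>set K. D v u))"
| "certifies_kernels D Vs (Branch v t\<^sub>1 t\<^sub>2) P Q \<longleftrightarrow>
     certifies_kernels D Vs t\<^sub>1 (v # P) Q \<and> certifies_kernels D Vs t\<^sub>2 P (v # Q)"

lemma certifies_kernels_imp_kernel:
  assumes "certifies_kernels D Vs t P Q" "set P \<subseteq> X" "X \<subseteq> set Vs - set Q"
  shows "\<exists>K. is_kernel D X K"
  using assms
proof (induction t arbitrary: P Q)
  case (Leaf K)
  then have "is_kernel D X (set K)"
    unfolding is_kernel_def by auto
  then show ?case ..
next
  case (Branch v t\<^sub>1 t\<^sub>2)
  show ?case
  proof (cases "v \<in> X")
    case True
    with Branch show ?thesis by (intro Branch.IH(1)[of "v # P" Q]) auto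
  next
    case False
    with Branch show ?thesis by (intro Branch.IH(2)[of P "v # Q"]) auto
  qed
qed

lemma certifies_kernels_imp_kernel_perfect:
  "certifies_kernels D Vs t [] [] \<Longrightarrow> kernel_perfect D (set Vs)"
  unfolding kernel_perfect_def using certifies_kernels_imp_kernel by fastforce

definition theta_vertices :: "nat list \<Rightarrow> theta_vertex list" where
  "theta_vertices ls = TU # TW # concat (map (\<lambda>i. map (TM i) [1..<ls ! i]) [0..<length ls])"

lemma set_theta_vertices: "set (theta_vertices ls) = theta_V ls"
  unfolding theta_vertices_def theta_V_def by auto

lemma theta_E_iff:
  "theta_E ls x y \<longleftrightarrow> (\<exists>i\<in>set [0..<length ls]. \<exists>j\<in>set [0..<ls ! i].
      (x = theta_pv ls i j \<and> y = theta_pv ls i (Suc j)) \<or>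
      (y = theta_pv ls i j \<and> x = theta_pv ls i (Suc j)))"
  unfolding theta_E_def by (simp add: Bex_def)

definition orientation :: "(theta_vertex \<times> theta_vertex) list" where
  "orientation =
    [(TU, TW), (TU, TM 0 1), (TU, TM 1 2), (TU, TM 2 2),
     (TM 0 1, TW), (TM 0 1, TM 2 3),
     (TM 1 1, TU), (TM 1 1, TM 0 1), (TM 1 1, TM 1 2), (TM 1 1, TM 1 3),
     (TM 1 2, TW), (TM 1 2, TM 1 3), (TM 1 2, TM 2 2), (TM 1 2, TM 2 3), (TM 1 2, TM 3 3),
     (TM 1 3, TW), (TM 1 3, TM 0 1), (TM 1 3, TM 2 2), (TM 1 3, TM 2 3), (TM 1 3, TM 3 3),
     (TM 2 1, TU), (TM 2 1, TM 0 1), (TM 2 1, TM 1 1), (TM 2 1, TM 2 2), (TM 2 1, TM 2 3),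
     (TM 2 2, TW), (TM 2 2, TM 2 3), (TM 2 2, TM 3 3),
     (TM 2 3, TW),
     (TM 3 1, TU), (TM 3 1, TM 0 1), (TM 3 1, TM 1 1), (TM 3 1, TM 2 1), (TM 3 1, TM 3 2),
     (TM 3 2, TU), (TM 3 2, TW), (TM 3 2, TM 0 1), (TM 3 2, TM 1 1), (TM 3 2, TM 2 1),
     (TM 3 3, TW), (TM 3 3, TM 0 1), (TM 3 3, TM 2 3), (TM 3 3, TM 3 1), (TM 3 3, TM 3 2)]"

definition oriented :: "theta_vertex \<Rightarrow> theta_vertex \<Rightarrow> bool" where
  "oriented x y \<longleftrightarrow> (x, y) \<in> set orientation"

definition theta_2444_kernel_tree :: "theta_vertex kernel_tree" where
  "theta_2444_kernel_tree =
    Branch TU (Branch TW (Branch (TM 1 1) (Leaf [TW, TM 1 1]) (Branch (TM 2 1) (Leaf [TW,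
    TM 2 1]) (Branch (TM 3 1) (Leaf [TW, TM 3 1]) (Leaf [TW])))) (Branch (TM 2 3) (Leaf [TU,
    TM 2 3]) (Branch (TM 0 1) (Branch (TM 2 2) (Leaf [TM 0 1, TM 2 2]) (Branch (TM 1 2) (Leaf
    [TM 0 1, TM 1 2]) (Leaf [TM 0 1]))) (Branch (TM 3 3) (Leaf [TU, TM 3 3]) (Branch (TM 1 1)
    (Branch (TM 2 2) (Leaf [TM 1 1, TM 2 2]) (Branch (TM 1 3) (Leaf [TU, TM 1 3]) (Branch
    (TM 1 2) (Branch (TM 2 1) (Leaf [TM 1 2, TM 2 1]) (Branch (TM 3 2) (Leaf [TM 1 2, TM 3 2])
    (Branch (TM 3 1) (Leaf [TM 1 2, TM 3 1]) (Leaf [TM 1 2])))) (Leaf [TU])))) (Branch (TM 1 2)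
    (Branch (TM 1 3) (Branch (TM 2 2) (Branch (TM 3 2) (Leaf [TM 2 2, TM 3 2]) (Branch (TM 3 1)
    (Leaf [TM 2 2, TM 3 1]) (Leaf [TM 2 2]))) (Leaf [TU, TM 1 3])) (Branch (TM 2 1) (Branch
    (TM 2 2) (Branch (TM 3 2) (Leaf [TM 2 2, TM 3 2]) (Branch (TM 3 1) (Leaf [TM 2 2, TM 3 1])
    (Leaf [TM 2 2]))) (Leaf [TM 1 2, TM 2 1])) (Branch (TM 2 2) (Branch (TM 3 2) (Leaf [TM 2 2,
    TM 3 2]) (Branch (TM 3 1) (Leaf [TM 2 2, TM 3 1]) (Leaf [TM 2 2]))) (Branch (TM 3 2) (Leaf
    [TM 1 2, TM 3 2]) (Branch (TM 3 1) (Leaf [TM 1 2, TM 3 1]) (Leaf [TM 1 2])))))) (Branch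
    (TM 1 3) (Branch (TM 2 2) (Branch (TM 3 2) (Leaf [TM 2 2, TM 3 2]) (Branch (TM 3 1) (Leaf
    [TM 2 2, TM 3 1]) (Leaf [TM 2 2]))) (Leaf [TU, TM 1 3])) (Branch (TM 2 2) (Branch (TM 3 2)
    (Leaf [TM 2 2, TM 3 2]) (Branch (TM 3 1) (Leaf [TM 2 2, TM 3 1]) (Leaf [TM 2 2]))) (Leaf
    [TU]))))))))) (Branch TW (Branch (TM 1 1) (Leaf [TW, TM 1 1]) (Branch (TM 2 1) (Leaf [TW,
    TM 2 1]) (Branch (TM 3 1) (Leaf [TW, TM 3 1]) (Leaf [TW])))) (Branch (TM 0 1) (Branch
    (TM 1 1) (Branch (TM 2 3) (Leaf [TM 1 1, TM 2 3]) (Branch (TM 2 2) (Leaf [TM 0 1, TM 2 2])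
    (Branch (TM 1 2) (Leaf [TM 0 1, TM 1 2]) (Leaf [TM 0 1])))) (Branch (TM 1 2) (Branch
    (TM 1 3) (Branch (TM 2 1) (Branch (TM 2 2) (Branch (TM 2 3) (Branch (TM 3 2) (Leaf [TM 2 3,
    TM 3 2]) (Branch (TM 3 1) (Leaf [TM 2 3, TM 3 1]) (Leaf [TM 2 3]))) (Leaf [TM 0 1, TM 2 2]))
    (Branch (TM 2 3) (Branch (TM 3 2) (Leaf [TM 2 3, TM 3 2]) (Branch (TM 3 1) (Leaf [TM 2 3,
    TM 3 1]) (Leaf [TM 2 3]))) (Leaf [TM 0 1, TM 1 2]))) (Branch (TM 2 2) (Branch (TM 2 3)
    (Branch (TM 3 2) (Leaf [TM 2 3, TM 3 2]) (Branch (TM 3 1) (Leaf [TM 2 3, TM 3 1]) (Leaf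
    [TM 2 3]))) (Leaf [TM 0 1, TM 2 2])) (Branch (TM 2 3) (Branch (TM 3 2) (Leaf [TM 2 3,
    TM 3 2]) (Branch (TM 3 1) (Leaf [TM 2 3, TM 3 1]) (Leaf [TM 2 3]))) (Leaf [TM 0 1,
    TM 1 2])))) (Branch (TM 2 1) (Branch (TM 2 2) (Branch (TM 2 3) (Branch (TM 3 2) (Leaf
    [TM 2 3, TM 3 2]) (Branch (TM 3 1) (Leaf [TM 2 3, TM 3 1]) (Leaf [TM 2 3]))) (Leaf [TM 0 1,
    TM 2 2])) (Branch (TM 2 3) (Branch (TM 3 2) (Leaf [TM 2 3, TM 3 2]) (Branch (TM 3 1) (Leaf
    [TM 2 3, TM 3 1]) (Leaf [TM 2 3]))) (Leaf [TM 0 1, TM 1 2]))) (Branch (TM 2 2) (Branch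
    (TM 2 3) (Branch (TM 3 2) (Leaf [TM 2 3, TM 3 2]) (Branch (TM 3 1) (Leaf [TM 2 3, TM 3 1])
    (Leaf [TM 2 3]))) (Leaf [TM 0 1, TM 2 2])) (Branch (TM 2 3) (Branch (TM 3 2) (Leaf [TM 2 3,
    TM 3 2]) (Branch (TM 3 1) (Leaf [TM 2 3, TM 3 1]) (Leaf [TM 2 3]))) (Leaf [TM 0 1,
    TM 1 2]))))) (Branch (TM 1 3) (Branch (TM 2 1) (Branch (TM 2 2) (Branch (TM 2 3) (Branch
    (TM 3 2) (Leaf [TM 2 3, TM 3 2]) (Branch (TM 3 1) (Leaf [TM 2 3, TM 3 1]) (Leaf [TM 2 3])))
    (Leaf [TM 0 1, TM 2 2])) (Branch (TM 2 3) (Branch (TM 3 2) (Leaf [TM 2 3, TM 3 2]) (Branch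
    (TM 3 1) (Leaf [TM 2 3, TM 3 1]) (Leaf [TM 2 3]))) (Leaf [TM 0 1]))) (Branch (TM 2 2)
    (Branch (TM 2 3) (Branch (TM 3 2) (Leaf [TM 2 3, TM 3 2]) (Branch (TM 3 1) (Leaf [TM 2 3,
    TM 3 1]) (Leaf [TM 2 3]))) (Leaf [TM 0 1, TM 2 2])) (Branch (TM 2 3) (Branch (TM 3 2) (Leaf
    [TM 2 3, TM 3 2]) (Branch (TM 3 1) (Leaf [TM 2 3, TM 3 1]) (Leaf [TM 2 3]))) (Leaf
    [TM 0 1])))) (Branch (TM 2 1) (Branch (TM 2 2) (Branch (TM 2 3) (Branch (TM 3 2) (Leaf
    [TM 2 3, TM 3 2]) (Branch (TM 3 1) (Leaf [TM 2 3, TM 3 1]) (Leaf [TM 2 3]))) (Leaf [TM 0 1,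
    TM 2 2])) (Branch (TM 2 3) (Branch (TM 3 2) (Leaf [TM 2 3, TM 3 2]) (Branch (TM 3 1) (Leaf
    [TM 2 3, TM 3 1]) (Leaf [TM 2 3]))) (Leaf [TM 0 1]))) (Branch (TM 2 2) (Branch (TM 2 3)
    (Branch (TM 3 2) (Leaf [TM 2 3, TM 3 2]) (Branch (TM 3 1) (Leaf [TM 2 3, TM 3 1]) (Leaf
    [TM 2 3]))) (Leaf [TM 0 1, TM 2 2])) (Branch (TM 2 3) (Branch (TM 3 2) (Leaf [TM 2 3,
    TM 3 2]) (Branch (TM 3 1) (Leaf [TM 2 3, TM 3 1]) (Leaf [TM 2 3]))) (Leaf [TM 0 1])))))))
    (Branch (TM 1 1) (Branch (TM 2 3) (Leaf [TM 1 1, TM 2 3]) (Branch (TM 3 3) (Leaf [TM 1 1,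
    TM 3 3]) (Branch (TM 2 2) (Leaf [TM 1 1, TM 2 2]) (Branch (TM 1 2) (Branch (TM 1 3) (Branch
    (TM 2 1) (Leaf [TM 1 3, TM 2 1]) (Branch (TM 3 2) (Leaf [TM 1 3, TM 3 2]) (Branch (TM 3 1)
    (Leaf [TM 1 3, TM 3 1]) (Leaf [TM 1 3])))) (Branch (TM 2 1) (Leaf [TM 1 2, TM 2 1]) (Branch
    (TM 3 2) (Leaf [TM 1 2, TM 3 2]) (Branch (TM 3 1) (Leaf [TM 1 2, TM 3 1]) (Leaf
    [TM 1 2]))))) (Branch (TM 1 3) (Branch (TM 2 1) (Leaf [TM 1 3, TM 2 1]) (Branch (TM 3 2)
    (Leaf [TM 1 3, TM 3 2]) (Branch (TM 3 1) (Leaf [TM 1 3, TM 3 1]) (Leaf [TM 1 3])))) (Leaf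
    [TM 1 1])))))) (Branch (TM 1 2) (Branch (TM 1 3) (Branch (TM 2 1) (Branch (TM 2 2) (Branch
    (TM 2 3) (Branch (TM 3 2) (Leaf [TM 2 3, TM 3 2]) (Branch (TM 3 1) (Leaf [TM 2 3, TM 3 1])
    (Leaf [TM 2 3]))) (Branch (TM 3 2) (Leaf [TM 2 2, TM 3 2]) (Branch (TM 3 1) (Leaf [TM 2 2,
    TM 3 1]) (Branch (TM 3 3) (Leaf [TM 2 1, TM 3 3]) (Leaf [TM 2 2]))))) (Branch (TM 2 3)
    (Branch (TM 3 2) (Leaf [TM 2 3, TM 3 2]) (Branch (TM 3 1) (Leaf [TM 2 3, TM 3 1]) (Leaf
    [TM 2 3]))) (Branch (TM 3 3) (Leaf [TM 2 1, TM 3 3]) (Leaf [TM 1 3, TM 2 1])))) (Branch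
    (TM 2 2) (Branch (TM 2 3) (Branch (TM 3 2) (Leaf [TM 2 3, TM 3 2]) (Branch (TM 3 1) (Leaf
    [TM 2 3, TM 3 1]) (Leaf [TM 2 3]))) (Branch (TM 3 2) (Leaf [TM 2 2, TM 3 2]) (Branch
    (TM 3 1) (Leaf [TM 2 2, TM 3 1]) (Branch (TM 3 3) (Leaf [TM 3 3]) (Leaf [TM 2 2])))))
    (Branch (TM 2 3) (Branch (TM 3 2) (Leaf [TM 2 3, TM 3 2]) (Branch (TM 3 1) (Leaf [TM 2 3,
    TM 3 1]) (Leaf [TM 2 3]))) (Branch (TM 3 2) (Leaf [TM 1 3, TM 3 2]) (Branch (TM 3 1) (Leaf
    [TM 1 3, TM 3 1]) (Branch (TM 3 3) (Leaf [TM 3 3]) (Leaf [TM 1 3]))))))) (Branch (TM 2 1)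
    (Branch (TM 2 2) (Branch (TM 2 3) (Branch (TM 3 2) (Leaf [TM 2 3, TM 3 2]) (Branch (TM 3 1)
    (Leaf [TM 2 3, TM 3 1]) (Leaf [TM 2 3]))) (Branch (TM 3 2) (Leaf [TM 2 2, TM 3 2]) (Branch
    (TM 3 1) (Leaf [TM 2 2, TM 3 1]) (Branch (TM 3 3) (Leaf [TM 2 1, TM 3 3]) (Leaf
    [TM 2 2]))))) (Branch (TM 2 3) (Branch (TM 3 2) (Leaf [TM 2 3, TM 3 2]) (Branch (TM 3 1)
    (Leaf [TM 2 3, TM 3 1]) (Leaf [TM 2 3]))) (Branch (TM 3 3) (Leaf [TM 2 1, TM 3 3]) (Leaf
    [TM 1 2, TM 2 1])))) (Branch (TM 2 2) (Branch (TM 2 3) (Branch (TM 3 2) (Leaf [TM 2 3,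
    TM 3 2]) (Branch (TM 3 1) (Leaf [TM 2 3, TM 3 1]) (Leaf [TM 2 3]))) (Branch (TM 3 2) (Leaf
    [TM 2 2, TM 3 2]) (Branch (TM 3 1) (Leaf [TM 2 2, TM 3 1]) (Branch (TM 3 3) (Leaf [TM 3 3])
    (Leaf [TM 2 2]))))) (Branch (TM 2 3) (Branch (TM 3 2) (Leaf [TM 2 3, TM 3 2]) (Branch
    (TM 3 1) (Leaf [TM 2 3, TM 3 1]) (Leaf [TM 2 3]))) (Branch (TM 3 2) (Leaf [TM 1 2, TM 3 2])
    (Branch (TM 3 1) (Leaf [TM 1 2, TM 3 1]) (Branch (TM 3 3) (Leaf [TM 3 3]) (Leaf
    [TM 1 2])))))))) (Branch (TM 1 3) (Branch (TM 2 1) (Branch (TM 2 2) (Branch (TM 2 3) (Branch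
    (TM 3 2) (Leaf [TM 2 3, TM 3 2]) (Branch (TM 3 1) (Leaf [TM 2 3, TM 3 1]) (Leaf [TM 2 3])))
    (Branch (TM 3 2) (Leaf [TM 2 2, TM 3 2]) (Branch (TM 3 1) (Leaf [TM 2 2, TM 3 1]) (Branch
    (TM 3 3) (Leaf [TM 2 1, TM 3 3]) (Leaf [TM 2 2]))))) (Branch (TM 2 3) (Branch (TM 3 2) (Leaf
    [TM 2 3, TM 3 2]) (Branch (TM 3 1) (Leaf [TM 2 3, TM 3 1]) (Leaf [TM 2 3]))) (Branch
    (TM 3 3) (Leaf [TM 2 1, TM 3 3]) (Leaf [TM 1 3, TM 2 1])))) (Branch (TM 2 2) (Branch
    (TM 2 3) (Branch (TM 3 2) (Leaf [TM 2 3, TM 3 2]) (Branch (TM 3 1) (Leaf [TM 2 3, TM 3 1])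
    (Leaf [TM 2 3]))) (Branch (TM 3 2) (Leaf [TM 2 2, TM 3 2]) (Branch (TM 3 1) (Leaf [TM 2 2,
    TM 3 1]) (Branch (TM 3 3) (Leaf [TM 3 3]) (Leaf [TM 2 2]))))) (Branch (TM 2 3) (Branch
    (TM 3 2) (Leaf [TM 2 3, TM 3 2]) (Branch (TM 3 1) (Leaf [TM 2 3, TM 3 1]) (Leaf [TM 2 3])))
    (Branch (TM 3 2) (Leaf [TM 1 3, TM 3 2]) (Branch (TM 3 1) (Leaf [TM 1 3, TM 3 1]) (Branch
    (TM 3 3) (Leaf [TM 3 3]) (Leaf [TM 1 3]))))))) (Branch (TM 2 1) (Branch (TM 2 2) (Branch
    (TM 2 3) (Branch (TM 3 2) (Leaf [TM 2 3, TM 3 2]) (Branch (TM 3 1) (Leaf [TM 2 3, TM 3 1])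
    (Leaf [TM 2 3]))) (Branch (TM 3 2) (Leaf [TM 2 2, TM 3 2]) (Branch (TM 3 1) (Leaf [TM 2 2,
    TM 3 1]) (Branch (TM 3 3) (Leaf [TM 2 1, TM 3 3]) (Leaf [TM 2 2]))))) (Branch (TM 2 3)
    (Branch (TM 3 2) (Leaf [TM 2 3, TM 3 2]) (Branch (TM 3 1) (Leaf [TM 2 3, TM 3 1]) (Leaf
    [TM 2 3]))) (Branch (TM 3 3) (Leaf [TM 2 1, TM 3 3]) (Leaf [TM 2 1])))) (Branch (TM 2 2)
    (Branch (TM 2 3) (Branch (TM 3 2) (Leaf [TM 2 3, TM 3 2]) (Branch (TM 3 1) (Leaf [TM 2 3,
    TM 3 1]) (Leaf [TM 2 3]))) (Branch (TM 3 2) (Leaf [TM 2 2, TM 3 2]) (Branch (TM 3 1) (Leaf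
    [TM 2 2, TM 3 1]) (Branch (TM 3 3) (Leaf [TM 3 3]) (Leaf [TM 2 2]))))) (Branch (TM 2 3)
    (Branch (TM 3 2) (Leaf [TM 2 3, TM 3 2]) (Branch (TM 3 1) (Leaf [TM 2 3, TM 3 1]) (Leaf
    [TM 2 3]))) (Branch (TM 3 2) (Leaf [TM 3 2]) (Branch (TM 3 1) (Leaf [TM 3 1]) (Branch
    (TM 3 3) (Leaf [TM 3 3]) (Leaf []))))))))))))"

lemma kernel_perfect_oriented: "kernel_perfect oriented (theta_V [2,4,4,4])"
proof -
  have "certifies_kernels oriented (theta_vertices [2,4,4,4]) theta_2444_kernel_tree [] []"
    unfolding theta_2444_kernel_tree_def by code_simp
  then show ?thesis
    unfolding set_theta_vertices[symmetric] by (rule certifies_kernels_imp_kernel_perfect)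
qed

lemma finite_theta_V: "finite (theta_V ls)"
  unfolding set_theta_vertices[symmetric] by (rule finite_set)

lemma card_theta_V_2444: "card (theta_V [2,4,4,4]) = 12"
  unfolding set_theta_vertices[symmetric] by code_simp

lemma oriented_out_degree_less:
  assumes "v \<in> theta_V [2,4,4,4]"
  shows "card {u\<in>theta_V [2,4,4,4]. oriented v u} < 6"
proof -
  have "\<forall>v\<in>set (theta_vertices [2,4,4,4]).
          card (set (filter (oriented v) (theta_vertices [2,4,4,4]))) < 6"
    by code_simp
  with assms show ?thesis
    unfolding set_filter set_theta_vertices by blast
qed

lemma square_edge_imp_oriented:
  assumes "graph_square (theta_V [2,4,4,4]) (theta_E [2,4,4,4]) x y"
  shows "oriented x y \<or> oriented y x"
proof -
  have "\<forall>x\<in>set (theta_vertices [2,4,4,4]). \<forall>y\<in>set (theta_vertices [2,4,4,4]).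
          graph_square (set (theta_vertices [2,4,4,4])) (theta_E [2,4,4,4]) x y \<longrightarrow>
          oriented x y \<or> oriented y x"
    unfolding graph_square_def theta_E_iff by code_simp
  with assms show ?thesis
    unfolding set_theta_vertices graph_square_def by blast
qed

lemma oriented_clique_cover:
  obtains \<Q> where "finite \<Q>" "card \<Q> \<le> 2" "theta_V [2,4,4,4] \<subseteq> \<Union>\<Q>"
    "\<forall>Q\<in>\<Q>. \<forall>x\<in>Q. \<forall>y\<in>Q. x \<noteq> y \<longrightarrow> oriented x y \<or> oriented y x"
proof
  let ?\<Q> = "{{TU, TM 0 1, TM 1 1, TM 2 1, TM 3 1, TM 3 2},
               {TW, TM 1 2, TM 1 3, TM 2 2, TM 2 3, TM 3 3}}"
  show "finite ?\<Q>" "card ?\<Q> \<le> 2"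
    by (simp_all add: card_insert_if)
  show "theta_V [2,4,4,4] \<subseteq> \<Union>?\<Q>"
    unfolding set_theta_vertices[symmetric] by code_simp
  show "\<forall>Q\<in>?\<Q>. \<forall>x\<in>Q. \<forall>y\<in>Q. x \<noteq> y \<longrightarrow> oriented x y \<or> oriented y x"
    by (simp add: oriented_def orientation_def)
qed

theorem lemma3p6:
  shows "equitably_choosable (theta_V [2,4,4,4])
           (graph_square (theta_V [2,4,4,4]) (theta_E [2,4,4,4])) 6 TYPE('c)"
  unfolding equitably_choosable_def
proof (intro allI impI)
  let ?V = "theta_V [2,4,4,4]" and ?G = "graph_square (theta_V [2,4,4,4]) (theta_E [2,4,4,4])"
  fix L :: "theta_vertex \<Rightarrow> 'c set"
  assume "k_assignment ?V 6 L"
  then have "\<forall>v\<in>?V. finite (L v) \<and> card {u\<in>?V. oriented v u} < card (L v)"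
    using oriented_out_degree_less unfolding k_assignment_def by simp
  then obtain f where f_in_L: "\<forall>v\<in>?V. f v \<in> L v"
    and f_proper: "\<forall>x\<in>?V. \<forall>y\<in>?V. oriented x y \<longrightarrow> f x \<noteq> f y"
    using kernel_perfect_list_colouring[OF finite_theta_V kernel_perfect_oriented] by blast
  have "f x \<noteq> f y" if "x \<in> ?V" "y \<in> ?V" "?G x y" for x y
    using square_edge_imp_oriented[OF that(3)] f_proper that(1,2) by force
  moreover have "card {v\<in>?V. f v = c} \<le> 2" for c
  proof -
    obtain \<Q> where "finite \<Q>" "card \<Q> \<le> 2" "?V \<subseteq> \<Union>\<Q>"
      and cliques: "\<forall>Q\<in>\<Q>. \<forall>x\<in>Q. \<forall>y\<in>Q. x \<noteq> y \<longrightarrow> oriented x y \<or> oriented y x"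
      by (rule oriented_clique_cover)
    with colour_class_card_le_clique_cover[OF finite_theta_V _ _ cliques f_proper]
    show ?thesis by (meson order_trans)
  qed
  moreover have "of_int \<lceil>real (card ?V) / real 6\<rceil> = (2::real)"
    by (simp add: card_theta_V_2444)
  ultimately show "\<exists>f. equitable_L_coloring ?V ?G 6 L f"
    unfolding equitable_L_coloring_def using f_in_L by auto
qed

end
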